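(* In the supercuspidal setting below, let $p$ be odd, $L/\mathbb Q_p$ unramified, $k=c_0\ge2$, assume $k\ge10$ or $p\ge10$, and let $\psi$ be a nontrivial Dirichlet character modulo $p^k$. Suppose that for some $i\in\{1,2,3\}$ and some $1\le j\le k$ we have $v_p(a_i)=j$. Then $\widehat H(\psi,a_1,a_2,a_3)=0$ unless $\psi$ has conductor $p^{k-j}$ and $v_p(a_1)=v_p(a_2)=v_p(a_3)=j$.
   Context: Supercuspidal setting: $p$ is a prime, $L/\mathbb Q_p$ a quadratic extension with ring of integers $\mathcal O_L$, ramification index $e\in\{1,2\}$, $d=v_p(\mathrm{disc}(L/\mathbb Q_p))$; $\eta_L$ is the nontrivial quadratic character of $\mathbb Q_p^\times$ trivial on $\mathrm{Nm}(L^\times)$. $\xi$ is a character of $L^\times$ with $\xi\neq\xi\circ(\text{Galois conjugation})$ and $\xi|_{\mathbb Q_p^\times}=\eta_L$, with $(L/\mathbb Q_p,\xi)$ an admissible pair (corresponding to a trivial central character dihedral supercuspidal representation of $\mathrm{PGL}_2(\mathbb Q_p)$). $c(\xi)$ is its conductor exponent and $c_0=c(\xi)/e$. Set $\kappa=c_0$ if $L$ unramified, $\kappa=c_0+1$ if $L$ ramified. Let $\gamma$ be a fixed complex number of modulus $1$ depending only on $L$. For integers $m,n$ and $k\ge1$, $$H(m,n;p^k)=\overline\gamma\,p^{-d/2}\sum_{\substack{t\in(\mathcal O_L/p^k\mathcal O_L)^\times\\ \mathrm{Nm}(t)\equiv mn\ (p^k)}}\xi(t)\,e_{p^k}(-\mathrm{Tr}(t))$$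 if $k\ge\kappa$ and $p\nmid mn$, and $H(m,n;p^k)=0$ otherwise. For a Dirichlet character $\psi$ mod $p^k$ and integers $a_1,a_2,a_3$, $$\widehat H(\psi,a_1,a_2,a_3)=p^{-2k}\sum_{u,x_1,x_2,x_3\bmod p^k}\overline\psi(u)H(\overline u x_1x_2x_3,1;p^k)\,e_{p^k}(a_1x_1+a_2x_2+a_3x_3-ua_1a_2a_3).$$ Here $e_q(x)=\exp(2\pi i x/q)$, $\overline u$ is the inverse mod $p^k$, and Dirichlet characters vanish on non-units. *)

theory Defs
  imports "HOL-Analysis.Analysis" "HOL-Number_Theory.Number_Theory"
begin

definition ee :: "int \<Rightarrow> int \<Rightarrow> complex" where
  "ee q x = exp (2 * of_real pi * \<i> * of_int x / of_int q)"

text \<open>Model of O_L for L/Q_p unramified, p odd: O_L = Z_p[sqrt eps] with eps an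
  integer quadratic non-residue mod p.  Elements of O_L / p^k O_L are pairs (x,y)
  (meaning x + y sqrt eps) with integer coordinates taken modulo p^k.\<close>
definition Lmult :: "int \<Rightarrow> int \<times> int \<Rightarrow> int \<times> int \<Rightarrow> int \<times> int" where
  "Lmult eps s t = (fst s * fst t + eps * snd s * snd t, fst s * snd t + snd s * fst t)"

definition Lnorm :: "int \<Rightarrow> int \<times> int \<Rightarrow> int" where
  "Lnorm eps t = fst t ^ 2 - eps * snd t ^ 2"

definition Ltrace :: "int \<times> int \<Rightarrow> int" where
  "Ltrace t = 2 * fst t"

definition Lconj :: "int \<times> int \<Rightarrow> int \<times> int" where
  "Lconj t = (fst t, - snd t)"

text \<open>Data of the character xi of L^x (L unramified) with c(xi) = c, seen on
  O_L^x (on which it factors through (O_L/p^c)^x); xi(p) = eta_L(p) = -1 is forced.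
  Conditions: character of (O_L/p^c)^x (unitary, multiplicative, periodic mod p^c),
  conductor exactly p^c, restriction to Z_p^x equal to eta_L|Z_p^x = 1,
  and xi \<noteq> xi o conj (which, for L unramified, is equivalent to admissibility).\<close>
definition unr_xi :: "int \<Rightarrow> int \<Rightarrow> nat \<Rightarrow> (int \<times> int \<Rightarrow> complex) \<Rightarrow> bool" where
  "unr_xi p eps c xi \<longleftrightarrow>
     (\<forall>x y a b. xi (x + p^c * a, y + p^c * b) = xi (x, y)) \<and>
     (\<forall>s t. \<not> p dvd Lnorm eps s \<longrightarrow> \<not> p dvd Lnorm eps t \<longrightarrow>
            xi (Lmult eps s t) = xi s * xi t) \<and>
     (\<forall>t. \<not> p dvd Lnorm eps t \<longrightarrow> norm (xi t) = 1) \<and>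
     (\<forall>a. \<not> p dvd a \<longrightarrow> xi (a, 0) = 1) \<and>
     (\<exists>t. \<not> p dvd Lnorm eps t \<and> xi (Lconj t) \<noteq> xi t) \<and>
     (if c = 0 then True
      else (\<exists>x y. xi (1 + p^(c-1) * x, p^(c-1) * y) \<noteq> 1))"

text \<open>H(m,n;p^k) in the unramified case (d = 0, kappa = c0).\<close>
definition Hunr :: "int \<Rightarrow> int \<Rightarrow> (int \<times> int \<Rightarrow> complex) \<Rightarrow> complex \<Rightarrow> nat \<Rightarrow> nat
                    \<Rightarrow> int \<Rightarrow> int \<Rightarrow> complex" where
  "Hunr p eps xi \<gamma> c0 k m n =
     (if k \<ge> c0 \<and> \<not> p dvd (m * n) then
        cnj \<gamma> * (\<Sum>t\<in>{t \<in> {0..<p^k} \<times> {0..<p^k}.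
                      \<not> p dvd Lnorm eps t \<and> [Lnorm eps t = m * n] (mod p^k)}.
                    xi t * ee (p^k) (- Ltrace t))
      else 0)"

text \<open>Inverse modulo q (only used at units; arbitrary otherwise).\<close>
definition invmod :: "int \<Rightarrow> int \<Rightarrow> int" where
  "invmod q u = (SOME v. [u * v = 1] (mod q))"

definition Hhat :: "int \<Rightarrow> int \<Rightarrow> (int \<times> int \<Rightarrow> complex) \<Rightarrow> complex \<Rightarrow> nat \<Rightarrow> nat
                    \<Rightarrow> (int \<Rightarrow> complex) \<Rightarrow> int \<Rightarrow> int \<Rightarrow> int \<Rightarrow> complex" where
  "Hhat p eps xi \<gamma> c0 k \<psi> a1 a2 a3 =
     (1 / of_int p ^ (2 * k)) *
     (\<Sum>u\<in>{0..<p^k}. \<Sum>x1\<in>{0..<p^k}. \<Sum>x2\<in>{0..<p^k}. \<Sum>x3\<in>{0..<p^k}.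
        cnj (\<psi> u) * Hunr p eps xi \<gamma> c0 k (invmod (p^k) u * x1 * x2 * x3) 1
        * ee (p^k) (a1 * x1 + a2 * x2 + a3 * x3 - u * a1 * a2 * a3))"

definition dirichlet_char :: "int \<Rightarrow> (int \<Rightarrow> complex) \<Rightarrow> bool" where
  "dirichlet_char q \<psi> \<longleftrightarrow>
     (\<forall>a. \<psi> (a + q) = \<psi> a) \<and> (\<forall>a b. \<psi> (a * b) = \<psi> a * \<psi> b) \<and> \<psi> 1 = 1 \<and>
     (\<forall>a. \<not> coprime a q \<longrightarrow> \<psi> a = 0)"

definition dchar_conductor :: "int \<Rightarrow> (int \<Rightarrow> complex) \<Rightarrow> int" where
  "dchar_conductor q \<psi> =
     (LEAST d. d > 0 \<and> d dvd q \<and> (\<forall>a. coprime a q \<and> [a = 1] (mod d) \<longrightarrow> \<psi> a = 1))"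

end

(*
  With q = p^k, the sum defining Hhat is
    S(a1,a2,a3) = sum over u,x1,x2,x3 of cnj(psi u) F(u' x1 x2 x3) e_q(a1 x1 + a2 x2 + a3 x3 - u a1 a2 a3),
  u' the inverse of u, and only two properties of F = H(-,1;q) matter: F(m) depends on m mod q
  and vanishes unless p does not divide m.

  Substituting u -> u t, x1 -> x1 t for a unit t fixes u' x1 x2 x3, so S = cnj(psi t) S whenever
  q | a1 (t - 1): if S is nonzero and p^j | a1, then psi is trivial on 1 + p^(k-j) Z.  Averaging
  the same substitution over t = 1 + s p^n, on which psi is trivial, instead produces the complete
  sum over s of e_(p^(k-n))(a1 x1 s), so S = 0 as soon as q | a1 a2 a3 p^n and p^(k-n) does not
  divide a1.  Playing these two facts against each other for n = k - j and n = k - j - 1, and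
  using that S is symmetric in a1, a2, a3, pins down the conductor and all three valuations.
*)
theory Submission
  imports Defs
begin

lemma ee_add: "ee q (x + y) = ee q x * ee q y"
  unfolding ee_def by (simp add: ring_distribs add_divide_distrib exp_add)

lemma ee_eq_1_iff:
  assumes "q \<noteq> 0"
  shows "ee q x = 1 \<longleftrightarrow> q dvd x"
proof -
  have "ee q x = 1 \<longleftrightarrow> (\<exists>n::int. real_of_int x / real_of_int q = of_int n)"
    unfolding ee_def exp_eq_1 using assms by (auto simp: field_simps)
  also have "\<dots> \<longleftrightarrow> q dvd x"
    using assms by (auto simp: field_simps dvd_def simp flip: of_int_mult)
  finally show ?thesis .
qed

lemma ee_cong: "[x = y] (mod q) \<Longrightarrow> ee q x = ee q y"
  by (cases "q = 0") (auto simp: cong_iff_lin ee_add ee_eq_1_iff)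

lemma ee_mult_cancel: "d \<noteq> 0 \<Longrightarrow> ee (d * q) (d * x) = ee q x"
  unfolding ee_def by (simp add: mult.assoc)

lemma ee_mult_of_nat: "ee q (x * int s) = ee q x ^ s"
  unfolding ee_def by (simp add: mult_ac flip: exp_of_nat_mult)

lemma sum_ee_multiples_eq_0:
  assumes "q > 0" and "\<not> q dvd x"
  shows "(\<Sum>s<nat q. ee q (x * int s)) = 0"
proof -
  have "ee q x ^ nat q = 1"
    using assms by (simp flip: ee_mult_of_nat add: ee_eq_1_iff)
  moreover have "ee q x \<noteq> 1"
    using assms by (simp add: ee_eq_1_iff)
  ultimately show ?thesis
    by (simp add: ee_mult_of_nat sum_gp_strict)
qed

lemma cong_invmod: "coprime u q \<Longrightarrow> [u * invmod q u = 1] (mod q)"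
  unfolding invmod_def by (rule someI_ex, rule cong_solve_coprime_int)

lemma invmod_cong:
  assumes "[u = u'] (mod q)"
  shows "invmod q u = invmod q u'"
proof -
  have "[u * v = 1] (mod q) \<longleftrightarrow> [u' * v = 1] (mod q)" for v
    using cong_mult[OF assms cong_refl, of v] by (meson cong_sym cong_trans)
  then show ?thesis
    unfolding invmod_def by simp
qed

lemma invmod_mult_cancel:
  assumes "coprime u q" and "coprime t q"
  shows "[invmod q (u * t) * (x * t) = invmod q u * x] (mod q)"
proof -
  have ut: "[u * t * invmod q (u * t) = 1] (mod q)"
    using assms by (simp add: cong_invmod)
  have "[invmod q (u * t) * (x * t) = invmod q (u * t) * (x * t) * (u * invmod q u)] (mod q)"
    using cong_mult[OF cong_refl cong_invmod[OF assms(1)], of "invmod q (u * t) * (x * t)"]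
    by (simp add: cong_sym)
  also have "invmod q (u * t) * (x * t) * (u * invmod q u) = (u * t * invmod q (u * t)) * (invmod q u * x)"
    by (simp add: ac_simps)
  also have "[\<dots> = 1 * (invmod q u * x)] (mod q)"
    by (rule cong_mult[OF ut cong_refl])
  finally show ?thesis by simp
qed

lemma bij_betw_mult_mod:
  fixes t q :: int
  assumes "coprime t q"
  shows "bij_betw (\<lambda>x. x * t mod q) {0..<q} {0..<q}"
proof (rule bij_betwI[of _ _ _ "\<lambda>x. x * modular_inverse q t mod q"])
  have inverse: "x * s mod q * s' mod q = x" if "x \<in> {0..<q}" "[s * s' = 1] (mod q)" for x s s'
  proof -
    have "[x * s mod q * s' = x * (s * s')] (mod q)"
      by (simp add: cong_def mod_simps mult.assoc)
    also have "[x * (s * s') = x * 1] (mod q)"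
      by (rule cong_mult[OF cong_refl that(2)])
    finally show ?thesis
      using that(1) by (simp add: cong_def)
  qed
  show "x * t mod q * modular_inverse q t mod q = x" if "x \<in> {0..<q}" for x
    using inverse[OF that cong_modular_inverse1[OF assms]] .
  show "x * modular_inverse q t mod q * t mod q = x" if "x \<in> {0..<q}" for x
    using inverse[OF that cong_modular_inverse2[OF assms]] .
qed auto

lemma sum_periodic_mult_unit:
  fixes f :: "int \<Rightarrow> 'a::comm_monoid_add"
  assumes "coprime t q" and periodic: "\<And>x y. [x = y] (mod q) \<Longrightarrow> f x = f y"
  shows "(\<Sum>x\<in>{0..<q}. f (x * t)) = (\<Sum>x\<in>{0..<q}. f x)"
proof -
  have "(\<Sum>x\<in>{0..<q}. f (x * t)) = (\<Sum>x\<in>{0..<q}. f (x * t mod q))"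
    by (intro sum.cong refl periodic) (simp add: cong_def)
  also have "\<dots> = (\<Sum>x\<in>{0..<q}. f x)"
    using sum.reindex_bij_betw[OF bij_betw_mult_mod[OF assms(1)]] by simp
  finally show ?thesis .
qed

lemma sum_sum_periodic_mult_unit:
  fixes f :: "int \<Rightarrow> int \<Rightarrow> 'a::comm_monoid_add"
  assumes t: "coprime t q"
    and periodic1: "\<And>u u' x. [u = u'] (mod q) \<Longrightarrow> f u x = f u' x"
    and periodic2: "\<And>u x x'. [x = x'] (mod q) \<Longrightarrow> f u x = f u x'"
  shows "(\<Sum>u\<in>{0..<q}. \<Sum>x\<in>{0..<q}. f (u * t) (x * t)) = (\<Sum>u\<in>{0..<q}. \<Sum>x\<in>{0..<q}. f u x)"
proof -
  have "(\<Sum>x\<in>{0..<q}. f (u * t) (x * t)) = (\<Sum>x\<in>{0..<q}. f (u * t) x)" for u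
    using sum_periodic_mult_unit[OF t] periodic2 by blast
  moreover have "(\<Sum>u\<in>{0..<q}. \<Sum>x\<in>{0..<q}. f (u * t) x) = (\<Sum>u\<in>{0..<q}. \<Sum>x\<in>{0..<q}. f u x)"
    using sum_periodic_mult_unit[OF t, of "\<lambda>u. \<Sum>x\<in>{0..<q}. f u x"] periodic1
    by (simp cong: sum.cong)
  ultimately show ?thesis
    by simp
qed

lemma dirichlet_char_cong:
  assumes "dirichlet_char q \<psi>" and "[a = b] (mod q)"
  shows "\<psi> a = \<psi> b"
proof -
  have period: "\<psi> (x + q) = \<psi> x" for x
    using assms(1) by (simp add: dirichlet_char_def)
  have "\<psi> (a + q * m) = \<psi> a" for m
  proof (induction m rule: int_induct[where k = 0])
    case (step1 i)
    then show ?case using period[of "a + q * i"] by (simp add: algebra_simps)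
  next
    case (step2 i)
    then show ?case using period[of "a + q * (i - 1)"] by (simp add: algebra_simps)
  qed simp
  then show ?thesis
    using assms(2) by (auto simp: cong_iff_lin)
qed

lemma dirichlet_char_mult: "dirichlet_char q \<psi> \<Longrightarrow> \<psi> (a * b) = \<psi> a * \<psi> b"
  by (simp add: dirichlet_char_def)

lemma dirichlet_char_nonunit: "dirichlet_char q \<psi> \<Longrightarrow> \<not> coprime a q \<Longrightarrow> \<psi> a = 0"
  by (simp add: dirichlet_char_def)

locale dirichlet_twist =
  fixes q :: int and \<psi> :: "int \<Rightarrow> complex" and F :: "int \<Rightarrow> complex"
  assumes dirichlet: "dirichlet_char q \<psi>"
    and F_cong: "[m = m'] (mod q) \<Longrightarrow> F m = F m'"
    and F_nonunit: "\<not> coprime m q \<Longrightarrow> F m = 0"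
begin

definition twisted_sum :: "int \<Rightarrow> int \<Rightarrow> int \<Rightarrow> complex" where
  "twisted_sum a1 a2 a3 =
     (\<Sum>u\<in>{0..<q}. \<Sum>x1\<in>{0..<q}. \<Sum>x2\<in>{0..<q}. \<Sum>x3\<in>{0..<q}.
        cnj (\<psi> u) * F (invmod q u * x1 * x2 * x3)
        * ee q (a1 * x1 + a2 * x2 + a3 * x3 - u * a1 * a2 * a3))"

lemma twisted_sum_swap12: "twisted_sum a1 a2 a3 = twisted_sum a2 a1 a3"
  unfolding twisted_sum_def
  by (rule sum.cong[OF refl], rule trans[OF sum.swap], intro sum.cong refl) (simp add: ac_simps)

lemma twisted_sum_swap23: "twisted_sum a1 a2 a3 = twisted_sum a1 a3 a2"
  unfolding twisted_sum_def
  by (rule sum.cong[OF refl], rule sum.cong[OF refl], rule trans[OF sum.swap],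
      intro sum.cong refl) (simp add: ac_simps)

lemma twisted_sum_symmetric:
  assumes "a \<in> {a1, a2, a3}"
  obtains b c where "twisted_sum a1 a2 a3 = twisted_sum a b c" and "a * b * c = a1 * a2 * a3"
proof -
  from assms consider "a = a1" | "a = a2" | "a = a3" by blast
  then show thesis
  proof cases
    case 1
    then show ?thesis using that[of a2 a3] by simp
  next
    case 2
    then show ?thesis using that[of a1 a3] twisted_sum_swap12 by (simp add: mult_ac)
  next
    case 3
    then show ?thesis using that[of a1 a2] twisted_sum_swap12 twisted_sum_swap23 by (simp add: mult_ac)
  qed
qed

lemma weight_substitute_unit:
  assumes t: "coprime t q"
  shows "cnj (\<psi> (u * t)) * F (invmod q (u * t) * (x1 * t) * x2 * x3) =
         cnj (\<psi> t) * (cnj (\<psi> u) * F (invmod q u * x1 * x2 * x3))"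
proof (cases "coprime u q")
  case True
  have "[invmod q (u * t) * (x1 * t) * x2 * x3 = invmod q u * x1 * x2 * x3] (mod q)"
    by (intro cong_mult cong_refl invmod_mult_cancel True t)
  then show ?thesis
    using F_cong dirichlet_char_mult[OF dirichlet] by (simp add: mult_ac)
next
  case False
  then show ?thesis
    using dirichlet_char_nonunit[OF dirichlet] dirichlet_char_mult[OF dirichlet] by simp
qed

lemma twisted_sum_substitute_unit:
  assumes t: "coprime t q"
  shows "twisted_sum a1 a2 a3 = cnj (\<psi> t) *
     (\<Sum>u\<in>{0..<q}. \<Sum>x1\<in>{0..<q}. \<Sum>x2\<in>{0..<q}. \<Sum>x3\<in>{0..<q}.
        cnj (\<psi> u) * F (invmod q u * x1 * x2 * x3)
        * ee q (a1 * x1 * t + a2 * x2 + a3 * x3 - u * t * a1 * a2 * a3))"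
proof -
  define G where "G u x1 = (\<Sum>x2\<in>{0..<q}. \<Sum>x3\<in>{0..<q}.
    cnj (\<psi> u) * F (invmod q u * x1 * x2 * x3) * ee q (a1 * x1 + a2 * x2 + a3 * x3 - u * a1 * a2 * a3))"
    for u x1
  have G_cong_u: "G u x1 = G u' x1" if uu: "[u = u'] (mod q)" for u u' x1
  proof -
    have "ee q (a1 * x1 + a2 * x2 + a3 * x3 - u * a1 * a2 * a3) =
          ee q (a1 * x1 + a2 * x2 + a3 * x3 - u' * a1 * a2 * a3)" for x2 x3
      by (intro ee_cong cong_diff cong_refl cong_mult uu)
    then show ?thesis
      unfolding G_def using dirichlet_char_cong[OF dirichlet uu] invmod_cong[OF uu] by simp
  qed
  have G_cong_x1: "G u x1 = G u x1'" if xx: "[x1 = x1'] (mod q)" for u x1 x1'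
  proof -
    have "F (invmod q u * x1 * x2 * x3) = F (invmod q u * x1' * x2 * x3)" for x2 x3
      by (intro F_cong cong_mult cong_refl xx)
    moreover have "ee q (a1 * x1 + a2 * x2 + a3 * x3 - u * a1 * a2 * a3) =
          ee q (a1 * x1' + a2 * x2 + a3 * x3 - u * a1 * a2 * a3)" for x2 x3
      by (intro ee_cong cong_diff cong_add cong_refl cong_mult xx)
    ultimately show ?thesis
      unfolding G_def by simp
  qed
  have "twisted_sum a1 a2 a3 = (\<Sum>u\<in>{0..<q}. \<Sum>x1\<in>{0..<q}. G u x1)"
    unfolding twisted_sum_def G_def ..
  also have "\<dots> = (\<Sum>u\<in>{0..<q}. \<Sum>x1\<in>{0..<q}. G (u * t) (x1 * t))"
    using sum_sum_periodic_mult_unit[OF t G_cong_u G_cong_x1] by (rule sym)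
  also have "\<dots> = (\<Sum>u\<in>{0..<q}. \<Sum>x1\<in>{0..<q}. \<Sum>x2\<in>{0..<q}. \<Sum>x3\<in>{0..<q}.
        cnj (\<psi> t) * (cnj (\<psi> u) * F (invmod q u * x1 * x2 * x3)
        * ee q (a1 * x1 * t + a2 * x2 + a3 * x3 - u * t * a1 * a2 * a3)))"
    unfolding G_def by (intro sum.cong refl) (simp only: weight_substitute_unit[OF t], simp add: ac_simps)
  finally show ?thesis
    by (simp add: sum_distrib_left)
qed

lemma twisted_sum_unit_invariant:
  assumes t: "coprime t q" and "q dvd a1 * (t - 1)"
  shows "twisted_sum a1 a2 a3 = cnj (\<psi> t) * twisted_sum a1 a2 a3"
proof -
  have unchanged: "ee q (a1 * x1 * t + a2 * x2 + a3 * x3 - u * t * a1 * a2 * a3) =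
        ee q (a1 * x1 + a2 * x2 + a3 * x3 - u * a1 * a2 * a3)" for u x1 x2 x3
  proof (rule ee_cong)
    have "(a1 * x1 * t + a2 * x2 + a3 * x3 - u * t * a1 * a2 * a3) -
          (a1 * x1 + a2 * x2 + a3 * x3 - u * a1 * a2 * a3) = a1 * (t - 1) * (x1 - u * a2 * a3)"
      by (simp add: algebra_simps)
    then show "[a1 * x1 * t + a2 * x2 + a3 * x3 - u * t * a1 * a2 * a3 =
                a1 * x1 + a2 * x2 + a3 * x3 - u * a1 * a2 * a3] (mod q)"
      using assms(2) by (simp add: cong_iff_dvd_diff)
  qed
  show ?thesis
    using twisted_sum_substitute_unit[OF t, of a1 a2 a3] unfolding unchanged twisted_sum_def[symmetric] .
qed

lemma twisted_sum_shift:
  assumes char_1: "\<psi> (1 + s * d) = 1" and dvd_prod: "q dvd a1 * a2 * a3 * d"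
  shows "twisted_sum a1 a2 a3 =
     (\<Sum>u\<in>{0..<q}. \<Sum>x1\<in>{0..<q}. \<Sum>x2\<in>{0..<q}. \<Sum>x3\<in>{0..<q}.
        cnj (\<psi> u) * F (invmod q u * x1 * x2 * x3)
        * ee q (a1 * x1 + a2 * x2 + a3 * x3 - u * a1 * a2 * a3) * ee q (a1 * x1 * d * s))"
proof -
  define t where "t = 1 + s * d"
  have "\<psi> t = 1"
    unfolding t_def by (rule char_1)
  then have t: "coprime t q"
    using dirichlet_char_nonunit[OF dirichlet] by force
  have shift: "ee q (a1 * x1 * t + a2 * x2 + a3 * x3 - u * t * a1 * a2 * a3) =
    ee q (a1 * x1 + a2 * x2 + a3 * x3 - u * a1 * a2 * a3) * ee q (a1 * x1 * d * s)" for u x1 x2 x3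
    unfolding ee_add[symmetric]
  proof (rule ee_cong)
    have "(a1 * x1 * t + a2 * x2 + a3 * x3 - u * t * a1 * a2 * a3) -
          ((a1 * x1 + a2 * x2 + a3 * x3 - u * a1 * a2 * a3) + a1 * x1 * d * s) =
          - (u * s * (a1 * a2 * a3 * d))"
      unfolding t_def by (simp add: algebra_simps)
    then show "[a1 * x1 * t + a2 * x2 + a3 * x3 - u * t * a1 * a2 * a3 =
                a1 * x1 + a2 * x2 + a3 * x3 - u * a1 * a2 * a3 + a1 * x1 * d * s] (mod q)"
      using dvd_prod by (simp add: cong_iff_dvd_diff)
  qed
  show ?thesis
    unfolding twisted_sum_substitute_unit[OF t] \<open>\<psi> t = 1\<close> shift by (simp add: mult.assoc)
qed

lemma twisted_sum_vanishes:
  assumes q_split: "q = d * M" and d_pos: "d > 0" and M_pos: "M > 0"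
    and char_1: "\<And>s. \<psi> (1 + s * d) = 1"
    and dvd: "M dvd a1 * a2 * a3" and not_dvd: "\<not> M dvd a1"
  shows "twisted_sum a1 a2 a3 = 0"
proof -
  have dvd_prod: "q dvd a1 * a2 * a3 * d"
    using dvd unfolding q_split by (simp add: mult.commute)
  define T where "T u x1 x2 x3 = cnj (\<psi> u) * F (invmod q u * x1 * x2 * x3)
    * ee q (a1 * x1 + a2 * x2 + a3 * x3 - u * a1 * a2 * a3)" for u x1 x2 x3
  have T_nonunit: "T u x1 x2 x3 = 0" if "\<not> coprime x1 q" for u x1 x2 x3
    unfolding T_def using that by (simp add: F_nonunit)
  have char_sum: "(\<Sum>s<nat M. ee q (a1 * x1 * d * int s)) = 0" if "coprime x1 q" for x1
  proof -
    have "coprime M x1"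
      using that q_split by (simp add: coprime_commute)
    then have "\<not> M dvd a1 * x1"
      using not_dvd by (simp add: coprime_dvd_mult_left_iff)
    moreover have "ee q (a1 * x1 * d * int s) = ee M (a1 * x1 * int s)" for s
      using ee_mult_cancel[of d M "a1 * x1 * int s"] d_pos q_split by (simp add: mult_ac)
    ultimately show ?thesis
      using sum_ee_multiples_eq_0[OF M_pos] by simp
  qed
  have "of_nat (nat M) * twisted_sum a1 a2 a3 = (\<Sum>s<nat M. twisted_sum a1 a2 a3)"
    by simp
  also have "\<dots> = (\<Sum>s<nat M. \<Sum>u\<in>{0..<q}. \<Sum>x1\<in>{0..<q}. \<Sum>x2\<in>{0..<q}. \<Sum>x3\<in>{0..<q}.
      T u x1 x2 x3 * ee q (a1 * x1 * d * int s))"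
    unfolding T_def using twisted_sum_shift[OF char_1 dvd_prod] by simp
  also have "\<dots> = (\<Sum>u\<in>{0..<q}. \<Sum>x1\<in>{0..<q}. \<Sum>x2\<in>{0..<q}. \<Sum>x3\<in>{0..<q}.
      T u x1 x2 x3 * (\<Sum>s<nat M. ee q (a1 * x1 * d * int s)))"
    by (simp add: sum_distrib_left sum.swap[where B = "{..<nat M}"])
  also have "\<dots> = 0"
  proof -
    have "T u x1 x2 x3 * (\<Sum>s<nat M. ee q (a1 * x1 * d * int s)) = 0" for u x1 x2 x3
      by (cases "coprime x1 q") (simp_all add: T_nonunit char_sum)
    then show ?thesis
      by (intro sum.neutral ballI)
  qed
  finally show ?thesis
    using M_pos by simp
qed

end

definition induced_modulus :: "int \<Rightarrow> (int \<Rightarrow> complex) \<Rightarrow> int \<Rightarrow> bool" where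
  "induced_modulus q \<psi> d \<longleftrightarrow> (\<forall>a. coprime a q \<and> [a = 1] (mod d) \<longrightarrow> \<psi> a = 1)"

lemma dchar_conductor_eq_Least:
  "dchar_conductor q \<psi> = (LEAST d. d > 0 \<and> d dvd q \<and> induced_modulus q \<psi> d)"
  unfolding dchar_conductor_def induced_modulus_def ..

lemma induced_modulus_dvd:
  "induced_modulus q \<psi> d \<Longrightarrow> d dvd d' \<Longrightarrow> induced_modulus q \<psi> d'"
  unfolding induced_modulus_def using cong_dvd_modulus by blast

lemma induced_modulus_1_iff: "induced_modulus q \<psi> 1 \<longleftrightarrow> (\<forall>a. coprime a q \<longrightarrow> \<psi> a = 1)"
  by (simp add: induced_modulus_def)

lemma dchar_conductor_prime_power:
  fixes p :: int
  assumes p: "prime p" and "m \<le> k"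
    and induced: "induced_modulus (p ^ k) \<psi> (p ^ m)"
    and not_induced: "\<not> induced_modulus (p ^ k) \<psi> (p ^ (m - 1))"
  shows "dchar_conductor (p ^ k) \<psi> = p ^ m"
  unfolding dchar_conductor_eq_Least
proof (rule Least_equality)
  have "p > 0" using p by (simp add: prime_gt_0_int)
  then show "p ^ m > 0 \<and> p ^ m dvd p ^ k \<and> induced_modulus (p ^ k) \<psi> (p ^ m)"
    using assms by (simp add: le_imp_power_dvd)
next
  fix d assume d: "d > 0 \<and> d dvd p ^ k \<and> induced_modulus (p ^ k) \<psi> d"
  then obtain e where "d = p ^ e"
    using divides_primepow[OF p, of d k] by auto
  moreover have "\<not> e < m"
  proof
    assume "e < m"
    then have "p ^ e dvd p ^ (m - 1)" by (simp add: le_imp_power_dvd)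
    then show False
      using d not_induced induced_modulus_dvd \<open>d = p ^ e\<close> by blast
  qed
  ultimately show "p ^ m \<le> d"
    using p by (simp add: power_increasing prime_ge_1_int)
qed

locale prime_power_twist = dirichlet_twist "p ^ k" \<psi> F for p :: int and k :: nat and \<psi> F +
  assumes prime: "prime p"
    and nontrivial: "\<exists>b. coprime b (p ^ k) \<and> \<psi> b \<noteq> 1"
begin

lemma not_induced_modulus_1: "\<not> induced_modulus (p ^ k) \<psi> 1"
  using nontrivial unfolding induced_modulus_1_iff by blast

lemma twisted_sum_nonzero_imp_induced_modulus:
  assumes nonzero: "twisted_sum a1 a2 a3 \<noteq> 0" and "a \<in> {a1, a2, a3}" and "p ^ j dvd a"
  shows "induced_modulus (p ^ k) \<psi> (p ^ (k - j))"
  unfolding induced_modulus_def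
proof (intro allI impI)
  fix t assume t: "coprime t (p ^ k) \<and> [t = 1] (mod p ^ (k - j))"
  obtain b c where bc: "twisted_sum a1 a2 a3 = twisted_sum a b c"
    using twisted_sum_symmetric[OF assms(2)] by metis
  have "p ^ k dvd p ^ j * p ^ (k - j)"
    by (simp add: le_imp_power_dvd flip: power_add)
  also have "p ^ j * p ^ (k - j) dvd a * (t - 1)"
    using assms(3) t by (intro mult_dvd_mono) (simp_all add: cong_iff_dvd_diff)
  finally have "twisted_sum a b c = cnj (\<psi> t) * twisted_sum a b c"
    using t twisted_sum_unit_invariant by blast
  then have "cnj (\<psi> t) = 1"
    using nonzero bc by simp
  then show "\<psi> t = 1"
    by (metis complex_cnj_cnj complex_cnj_one)
qed

lemma twisted_sum_nonzero_imp_dvd: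
  assumes nonzero: "twisted_sum a1 a2 a3 \<noteq> 0" and "a \<in> {a1, a2, a3}"
    and "1 \<le> n" and "n \<le> k"
    and induced: "induced_modulus (p ^ k) \<psi> (p ^ n)" and dvd_prod: "p ^ (k - n) dvd a1 * a2 * a3"
  shows "p ^ (k - n) dvd a"
proof (rule ccontr)
  assume not_dvd: "\<not> p ^ (k - n) dvd a"
  have char_1: "\<psi> (1 + s * p ^ n) = 1" for s
  proof -
    have "p dvd s * p ^ n"
      using assms(3) by (simp add: dvd_power)
    then have "p dvd 1 + s * p ^ n \<longleftrightarrow> p dvd 1"
      by (rule dvd_add_left_iff)
    then have "\<not> p dvd 1 + s * p ^ n"
      using prime not_prime_unit by blast
    then have "coprime (1 + s * p ^ n) (p ^ k)"
      using prime by (simp add: prime_imp_coprime coprime_commute)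
    then show ?thesis
      using induced by (simp add: induced_modulus_def cong_iff_dvd_diff)
  qed
  obtain b c where bc: "twisted_sum a1 a2 a3 = twisted_sum a b c" "a * b * c = a1 * a2 * a3"
    using twisted_sum_symmetric[OF assms(2)] by metis
  have "p ^ k = p ^ n * p ^ (k - n)"
    using assms(4) by (simp flip: power_add)
  then have "twisted_sum a b c = 0"
  proof (rule twisted_sum_vanishes)
    show "p ^ n > 0" "p ^ (k - n) > 0"
      using prime by (simp_all add: prime_gt_0_int)
    show "p ^ (k - n) dvd a * b * c"
      using dvd_prod bc(2) by simp
  qed (fact char_1 not_dvd)+
  with nonzero bc(1) show False by simp
qed

lemma twisted_sum_nonzero_imp_less:
  assumes nonzero: "twisted_sum a1 a2 a3 \<noteq> 0" and "a \<in> {a1, a2, a3}" and "p ^ j dvd a"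
  shows "j < k"
proof (rule ccontr)
  assume "\<not> j < k"
  then show False
    using twisted_sum_nonzero_imp_induced_modulus[OF assms] not_induced_modulus_1 by simp
qed

lemma twisted_sum_nonzero_imp_dvd_all:
  assumes nonzero: "twisted_sum a1 a2 a3 \<noteq> 0" and a: "a \<in> {a1, a2, a3}" and "p ^ j dvd a"
    and b: "b \<in> {a1, a2, a3}"
  shows "p ^ j dvd b"
proof -
  have "j < k"
    by (rule twisted_sum_nonzero_imp_less[OF nonzero a \<open>p ^ j dvd a\<close>])
  then have "p ^ (k - (k - j)) dvd a1 * a2 * a3"
    using \<open>p ^ j dvd a\<close> a by auto
  then show ?thesis
    using twisted_sum_nonzero_imp_dvd[OF nonzero b _ _ twisted_sum_nonzero_imp_induced_modulus[OF assms(1-3)]]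
      \<open>j < k\<close> by simp
qed

lemma twisted_sum_nonzero_imp_not_induced_modulus:
  assumes nonzero: "twisted_sum a1 a2 a3 \<noteq> 0" and a: "a \<in> {a1, a2, a3}"
    and "p ^ j dvd a" and not_dvd: "\<not> p ^ Suc j dvd a" and "1 \<le> j"
  shows "\<not> induced_modulus (p ^ k) \<psi> (p ^ (k - j - 1))"
proof
  assume induced: "induced_modulus (p ^ k) \<psi> (p ^ (k - j - 1))"
  then have "k - j - 1 \<ge> 1"
    using not_induced_modulus_1 by (cases "k - j - 1") auto
  have dvd_all: "p ^ j dvd b" if "b \<in> {a1, a2, a3}" for b
    using twisted_sum_nonzero_imp_dvd_all[OF nonzero a \<open>p ^ j dvd a\<close> that] .
  have "p dvd p ^ j"
    using \<open>1 \<le> j\<close> by (simp add: dvd_power)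
  then have "p ^ j * p dvd a1 * a2"
    using dvd_all by (intro mult_dvd_mono) (auto intro: dvd_trans)
  then have "p ^ Suc j dvd a1 * a2 * a3"
    unfolding power_Suc2 by (rule dvd_mult2)
  moreover have "k - (k - j - 1) = Suc j"
    using twisted_sum_nonzero_imp_less[OF nonzero a \<open>p ^ j dvd a\<close>] by simp
  ultimately have "p ^ Suc j dvd a"
    using twisted_sum_nonzero_imp_dvd[OF nonzero a \<open>k - j - 1 \<ge> 1\<close> _ induced] by simp
  with not_dvd show False ..
qed

lemma twisted_sum_nonzero_imp_conductor_and_valuations:
  assumes nonzero: "twisted_sum a1 a2 a3 \<noteq> 0" and a: "a \<in> {a1, a2, a3}"
    and mult_a: "multiplicity p a = j" and "1 \<le> j"
  shows "dchar_conductor (p ^ k) \<psi> = p ^ (k - j) \<and>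
         multiplicity p a1 = j \<and> multiplicity p a2 = j \<and> multiplicity p a3 = j"
proof -
  have "a \<noteq> 0" and "\<not> is_unit p"
    using mult_a \<open>1 \<le> j\<close> prime not_prime_unit by auto
  then have dvd_a: "p ^ j dvd a" and not_dvd_a: "\<not> p ^ Suc j dvd a"
    using power_dvd_iff_le_multiplicity[OF \<open>a \<noteq> 0\<close> \<open>\<not> is_unit p\<close>] mult_a
    by (simp_all del: power_Suc)
  have induced: "induced_modulus (p ^ k) \<psi> (p ^ (k - j))"
    by (rule twisted_sum_nonzero_imp_induced_modulus[OF nonzero a dvd_a])
  have not_induced: "\<not> induced_modulus (p ^ k) \<psi> (p ^ (k - j - 1))"
    by (rule twisted_sum_nonzero_imp_not_induced_modulus[OF nonzero a dvd_a not_dvd_a \<open>1 \<le> j\<close>])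
  have "multiplicity p b = j" if b: "b \<in> {a1, a2, a3}" for b
  proof (rule multiplicity_eqI)
    show "p ^ j dvd b"
      by (rule twisted_sum_nonzero_imp_dvd_all[OF nonzero a dvd_a b])
    show "\<not> p ^ Suc j dvd b"
      using twisted_sum_nonzero_imp_induced_modulus[OF nonzero b] not_induced by auto
  qed
  moreover have "dchar_conductor (p ^ k) \<psi> = p ^ (k - j)"
    using dchar_conductor_prime_power[OF prime _ induced] not_induced by simp
  ultimately show ?thesis
    by simp
qed

end

lemma Hunr_cong:
  assumes "1 \<le> k" and "[m = m'] (mod p ^ k)"
  shows "Hunr p eps xi \<gamma> c0 k m n = Hunr p eps xi \<gamma> c0 k m' n"
proof -
  have mn: "[m * n = m' * n] (mod p ^ k)"
    using assms(2) by (rule cong_mult[OF _ cong_refl])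
  then have "[m * n = m' * n] (mod p)"
    by (rule cong_dvd_modulus) (use assms(1) in \<open>simp add: dvd_power\<close>)
  then have "p dvd m * n \<longleftrightarrow> p dvd m' * n"
    by (rule cong_dvd_iff)
  moreover have "[Lnorm eps t = m * n] (mod p ^ k) \<longleftrightarrow> [Lnorm eps t = m' * n] (mod p ^ k)" for t
    using mn cong_sym cong_trans by blast
  ultimately show ?thesis
    unfolding Hunr_def by simp
qed

lemma Hunr_multiple: "p dvd m \<Longrightarrow> Hunr p eps xi \<gamma> c0 k m n = 0"
  unfolding Hunr_def by simp

theorem lemma5p15:
  fixes p eps :: int and k j :: nat and i :: nat and a :: "nat \<Rightarrow> int"
    and xi :: "int \<times> int \<Rightarrow> complex" and \<gamma> :: complex and \<psi> :: "int \<Rightarrow> complex"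
  assumes "prime p" and "odd p"
    and "\<not> QuadRes p eps"
    and "unr_xi p eps k xi"
    and "norm \<gamma> = 1"
    and "k \<ge> 2" and "k \<ge> 10 \<or> p \<ge> 10"
    and "dirichlet_char (p^k) \<psi>" and "\<exists>b. coprime b (p^k) \<and> \<psi> b \<noteq> 1"
    and "i \<in> {1,2,3}" and "1 \<le> j" and "j \<le> k" and "multiplicity p (a i) = j"
    and "Hhat p eps xi \<gamma> k k \<psi> (a 1) (a 2) (a 3) \<noteq> 0"
  shows "dchar_conductor (p^k) \<psi> = p^(k-j) \<and>
         multiplicity p (a 1) = j \<and> multiplicity p (a 2) = j \<and> multiplicity p (a 3) = j"
proof -
  interpret prime_power_twist p k \<psi> "\<lambda>m. Hunr p eps xi \<gamma> k k m 1"
  proof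
    show "Hunr p eps xi \<gamma> k k m 1 = Hunr p eps xi \<gamma> k k m' 1" if "[m = m'] (mod p ^ k)" for m m'
      using Hunr_cong[OF _ that] \<open>k \<ge> 2\<close> by simp
    show "Hunr p eps xi \<gamma> k k m 1 = 0" if "\<not> coprime m (p ^ k)" for m
    proof (rule Hunr_multiple)
      have "\<not> coprime m p"
        using that \<open>k \<ge> 2\<close> by simp
      then show "p dvd m"
        using \<open>prime p\<close> prime_imp_coprime coprime_commute by blast
    qed
  qed (use assms in auto)
  have "twisted_sum (a 1) (a 2) (a 3) \<noteq> 0"
    using assms(14) unfolding Hhat_def twisted_sum_def by auto
  moreover have "a i \<in> {a 1, a 2, a 3}"
    using assms(10) by auto
  ultimately show ?thesis
    using twisted_sum_nonzero_imp_conductor_and_valuations assms(11,13) by blast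
qed

end
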